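(* Let $\varphi\in\mathcal{M}$ be a matching. Then there exists a matching mechanism that is resolute, $\langle\varphi\rangle$-symmetric and weakly Pareto optimal.
   Context: Fix $n\ge 2$, $W=\{1,\dots,n\}$ (women), $M=\{n+1,\dots,2n\}$ (men), $I=W\cup M$. Permutations compose right-to-left. A preference profile is a function $p$ on $I$ assigning to each $x\in W$ a linear order $p(x)$ on $M$ and to each $y\in M$ a linear order $p(y)$ on $W$; $\mathcal{P}$ is the set of preference profiles. A matching is a permutation $\mu$ of $I$ with $\mu(W)=M$, $\mu(M)=W$ and $\mu(\mu(z))=z$ for all $z\in I$; $\mathcal{M}$ is the set of matchings. $\mu$ is weakly Pareto optimal for $p$ if there is no $\mu'\in\mathcal{M}$ with $\mu'(z)\succ_{p(z)}\mu(z)$ for every $z\in I$. Let $G^*=\{\psi\in\mathrm{Sym}(I):\{\psi(W),\psi(M)\}=\{W,M\}\}$. For a linear order $R$ on $X\subseteq I$ and $\psi\in\mathrm{Sym}(I)$, $\psi R$ is the relation on $\psi(X)$ with $(a,b)\in\psi R$ iff $(\psi^{-1}(a),\psi^{-1}(b))\in R$. For $p\in\mathcal{P}$, $\psi\in G^*$, $p^\psi(z)=\psi\,p(\psi^{-1}(z))$. For a permutation $\mu$, $\mu^\psi=\psi\mu\psi^{-1}$; $S^\psi=\{\mu^\psi:\mu\in S\}$. A matching mechanism is a correspondence $F$ from $\mathcal{P}$ to $\mathcal{M}$; it is resolute if $|F(p)|=1$ for all $p$; weakly Pareto optimal if every element of $F(p)$ is weakly Pareto optimal for $p$, for all $p$;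 for $U\subseteq G^*$ it is $U$-symmetric if $F(p^\psi)=F(p)^\psi$ for all $p\in\mathcal{P}$, $\psi\in U$. $\langle\varphi\rangle=\{id_I,\varphi\}$ is the group generated by $\varphi$. *)

theory Defs
  imports "HOL-Combinatorics.Permutations"
begin

definition women :: "nat \<Rightarrow> nat set" where "women n = {1..n}"
definition men :: "nat \<Rightarrow> nat set" where "men n = {n+1..2*n}"
definition agents :: "nat \<Rightarrow> nat set" where "agents n = women n \<union> men n"

(* A linear order R on X is a reflexive, transitive, antisymmetric, total relation
   on X (a set of pairs); (a,b) \<in> R means "a is weakly preferred to b". *)
definition strict_pref :: "(nat \<times> nat) set \<Rightarrow> nat \<Rightarrow> nat \<Rightarrow> bool" where
  "strict_pref R a b \<longleftrightarrow> (a, b) \<in> R \<and> a \<noteq> b"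

definition profiles :: "nat \<Rightarrow> (nat \<Rightarrow> (nat \<times> nat) set) set" where
  "profiles n = {p. (\<forall>x\<in>women n. linear_order_on (men n) (p x)) \<and>
                    (\<forall>y\<in>men n. linear_order_on (women n) (p y)) \<and>
                    (\<forall>z. z \<notin> agents n \<longrightarrow> p z = {})}"

definition matchings :: "nat \<Rightarrow> (nat \<Rightarrow> nat) set" where
  "matchings n = {\<mu>. \<mu> permutes agents n \<and> \<mu> ` women n = men n \<and> \<mu> ` men n = women n \<and>
                      (\<forall>z\<in>agents n. \<mu> (\<mu> z) = z)}"

definition weakly_pareto_optimal :: "nat \<Rightarrow> (nat \<Rightarrow> (nat \<times> nat) set) \<Rightarrow> (nat \<Rightarrow> nat) \<Rightarrow> bool" where
  "weakly_pareto_optimal n p \<mu> \<longleftrightarrow>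
     \<not> (\<exists>\<mu>'\<in>matchings n. \<forall>z\<in>agents n. strict_pref (p z) (\<mu>' z) (\<mu> z))"

definition Gstar :: "nat \<Rightarrow> (nat \<Rightarrow> nat) set" where
  "Gstar n = {\<psi>. \<psi> permutes agents n \<and> {\<psi> ` women n, \<psi> ` men n} = {women n, men n}}"

definition rel_act :: "(nat \<Rightarrow> nat) \<Rightarrow> (nat \<times> nat) set \<Rightarrow> (nat \<times> nat) set" where
  "rel_act \<psi> R = {(a, b). (inv \<psi> a, inv \<psi> b) \<in> R}"

definition profile_act :: "(nat \<Rightarrow> (nat \<times> nat) set) \<Rightarrow> (nat \<Rightarrow> nat) \<Rightarrow> (nat \<Rightarrow> (nat \<times> nat) set)" where
  "profile_act p \<psi> = (\<lambda>z. rel_act \<psi> (p (inv \<psi> z)))"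

definition perm_conj :: "(nat \<Rightarrow> nat) \<Rightarrow> (nat \<Rightarrow> nat) \<Rightarrow> (nat \<Rightarrow> nat)" where
  "perm_conj \<mu> \<psi> = \<psi> \<circ> \<mu> \<circ> inv \<psi>"

definition mechanism :: "nat \<Rightarrow> ((nat \<Rightarrow> (nat \<times> nat) set) \<Rightarrow> (nat \<Rightarrow> nat) set) \<Rightarrow> bool" where
  "mechanism n F \<longleftrightarrow> (\<forall>p\<in>profiles n. F p \<subseteq> matchings n)"

definition resolute :: "nat \<Rightarrow> ((nat \<Rightarrow> (nat \<times> nat) set) \<Rightarrow> (nat \<Rightarrow> nat) set) \<Rightarrow> bool" where
  "resolute n F \<longleftrightarrow> (\<forall>p\<in>profiles n. card (F p) = 1)"

definition mech_wpo :: "nat \<Rightarrow> ((nat \<Rightarrow> (nat \<times> nat) set) \<Rightarrow> (nat \<Rightarrow> nat) set) \<Rightarrow> bool" where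
  "mech_wpo n F \<longleftrightarrow> (\<forall>p\<in>profiles n. \<forall>\<mu>\<in>F p. weakly_pareto_optimal n p \<mu>)"

definition symmetric_wrt :: "nat \<Rightarrow> (nat \<Rightarrow> nat) set \<Rightarrow> ((nat \<Rightarrow> (nat \<times> nat) set) \<Rightarrow> (nat \<Rightarrow> nat) set) \<Rightarrow> bool" where
  "symmetric_wrt n U F \<longleftrightarrow>
     (\<forall>p\<in>profiles n. \<forall>\<psi>\<in>U. F (profile_act p \<psi>) = (\<lambda>\<mu>. perm_conj \<mu> \<psi>) ` F p)"

definition gen_group :: "(nat \<Rightarrow> nat) \<Rightarrow> (nat \<Rightarrow> nat) set" where
  "gen_group \<phi> = {id, \<phi>}"

end

(*
  For F(p) take a matching that commutes with \<phi> and is weakly Pareto optimal for p.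
  Weak Pareto optimality is invariant under the action of G*, so such a matching is
  also optimal for p^\<phi>; as \<phi> is an involution, p and p^\<phi> have the same candidates,
  and choosing the same one for both gives <\<phi>>-symmetry.  Candidates exist: conjugating
  \<phi> by the transposition of \<phi>(1) and the favourite man m of woman 1 yields a
  \<phi>-invariant matching in which woman 1 gets m, so no matching makes her strictly better off.
*)
theory Submission
  imports Defs
begin

lemma linear_order_on_finite_has_least:
  assumes "linear_order_on A R" "finite A" "A \<noteq> {}"
  obtains m where "m \<in> A" "\<And>b. b \<in> A \<Longrightarrow> (m, b) \<in> R"
proof -
  have "R \<subseteq> A \<times> A"
    using assms(1) by (simp add: linear_order_on_def partial_order_on_def preorder_on_def)
  then have "wf (R - Id)"
    using assms(2) linear_order_on_acyclic[OF assms(1)]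
    by (intro finite_acyclic_wf) (auto intro: finite_subset)
  then obtain m where m: "m \<in> A" and min: "\<And>b. (b, m) \<in> R - Id \<Longrightarrow> b \<notin> A"
    using wfE_min'[of "R - Id" A] assms(3) by metis
  have "(m, b) \<in> R" if "b \<in> A" for b
    using assms(1) m min[of b] that
    unfolding linear_order_on_def partial_order_on_def preorder_on_def refl_on_def total_on_def
    by (cases "b = m") auto
  then show thesis using m that by blast
qed

lemma Gstar_cases:
  assumes "\<psi> \<in> Gstar n"
  obtains "\<psi> ` women n = women n" "\<psi> ` men n = men n"
    | "\<psi> ` women n = men n" "\<psi> ` men n = women n"
  using assms unfolding Gstar_def doubleton_eq_iff by blast

lemma inv_in_Gstar:
  assumes "\<psi> \<in> Gstar n"
  shows "inv \<psi> \<in> Gstar n"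
proof -
  have perm: "\<psi> permutes agents n" using assms by (simp add: Gstar_def)
  have "inv \<psi> ` \<psi> ` A = A" for A
    using permutes_inj[OF perm] by (simp add: image_inv_f_f)
  then have "{inv \<psi> ` women n, inv \<psi> ` men n} = {women n, men n}"
    using assms by (elim Gstar_cases) (metis insert_commute)+
  then show ?thesis using permutes_inv[OF perm] by (simp add: Gstar_def)
qed

lemma matchings_subset_Gstar: "matchings n \<subseteq> Gstar n"
  by (auto simp: matchings_def Gstar_def)

lemma perm_conj_in_matchings:
  assumes "\<psi> \<in> Gstar n" "\<mu> \<in> matchings n"
  shows "perm_conj \<mu> \<psi> \<in> matchings n"
proof -
  have perm: "\<psi> permutes agents n" using assms(1) by (simp add: Gstar_def)
  have \<mu>: "\<mu> permutes agents n" "\<mu> ` women n = men n" "\<mu> ` men n = women n"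
    "\<And>z. z \<in> agents n \<Longrightarrow> \<mu> (\<mu> z) = z"
    using assms(2) by (auto simp: matchings_def)
  have img: "perm_conj \<mu> \<psi> ` A = \<psi> ` \<mu> ` inv \<psi> ` A" for A
    by (simp add: perm_conj_def image_comp)
  have inv_cancel: "inv \<psi> ` \<psi> ` A = A" for A
    using permutes_inj[OF perm] by (simp add: image_inv_f_f)
  have "perm_conj \<mu> \<psi> ` women n = men n \<and> perm_conj \<mu> \<psi> ` men n = women n"
    using assms(1) by (elim Gstar_cases) (metis img inv_cancel \<mu>(2,3))+
  moreover have "perm_conj \<mu> \<psi> permutes agents n"
    unfolding perm_conj_def by (intro permutes_compose permutes_inv perm \<mu>(1))
  moreover have "perm_conj \<mu> \<psi> (perm_conj \<mu> \<psi> z) = z" if "z \<in> agents n" for z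
    using that \<mu>(4) permutes_in_image[OF permutes_inv[OF perm]]
    by (simp add: perm_conj_def permutes_inverses[OF perm])
  ultimately show ?thesis by (simp add: matchings_def)
qed

lemma strict_pref_rel_act:
  assumes "bij \<psi>"
  shows "strict_pref (rel_act \<psi> R) a b \<longleftrightarrow> strict_pref R (inv \<psi> a) (inv \<psi> b)"
  using bij_is_inj[OF bij_imp_bij_inv[OF assms]]
  by (auto simp: strict_pref_def rel_act_def dest: injD)

lemma weakly_pareto_optimal_perm_conj:
  assumes "\<psi> \<in> Gstar n" "weakly_pareto_optimal n p \<mu>"
  shows "weakly_pareto_optimal n (profile_act p \<psi>) (perm_conj \<mu> \<psi>)"
  unfolding weakly_pareto_optimal_def
proof
  assume "\<exists>\<mu>'\<in>matchings n. \<forall>z\<in>agents n.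
    strict_pref (profile_act p \<psi> z) (\<mu>' z) (perm_conj \<mu> \<psi> z)"
  then obtain \<mu>' where \<mu>': "\<mu>' \<in> matchings n"
    and dominates: "\<And>z. z \<in> agents n \<Longrightarrow>
      strict_pref (profile_act p \<psi> z) (\<mu>' z) (perm_conj \<mu> \<psi> z)"
    by blast
  have perm: "\<psi> permutes agents n" using assms(1) by (simp add: Gstar_def)
  have "strict_pref (p z) (perm_conj \<mu>' (inv \<psi>) z) (\<mu> z)" if "z \<in> agents n" for z
    using dominates[OF permutes_in_image[OF perm, THEN iffD2, OF that]]
    by (simp add: profile_act_def perm_conj_def strict_pref_rel_act permutes_bij[OF perm]
        permutes_inverses[OF perm] permutes_inv_inv[OF perm])
  moreover have "perm_conj \<mu>' (inv \<psi>) \<in> matchings n"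
    using perm_conj_in_matchings[OF inv_in_Gstar[OF assms(1)] \<mu>'] .
  ultimately show False
    using assms(2) unfolding weakly_pareto_optimal_def by blast
qed

lemma matching_involution:
  assumes "\<mu> \<in> matchings n"
  shows "\<mu> (\<mu> z) = z"
  using assms by (cases "z \<in> agents n") (auto simp: matchings_def permutes_not_in)

lemma inv_matching:
  assumes "\<mu> \<in> matchings n"
  shows "inv \<mu> = \<mu>"
  using matching_involution[OF assms] by (intro inv_equality) auto

lemma profile_act_involution:
  assumes "\<And>z. \<phi> (\<phi> z) = z"
  shows "profile_act (profile_act p \<phi>) \<phi> = p"
proof -
  have "inv \<phi> = \<phi>" using assms by (intro inv_equality) auto
  then show ?thesis using assms by (simp add: profile_act_def rel_act_def)
qed

lemma profile_act_id [simp]: "profile_act p id = p"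
  by (simp add: profile_act_def rel_act_def inv_id)

lemma perm_conj_id [simp]: "perm_conj \<mu> id = \<mu>"
  by (simp add: perm_conj_def inv_id)

definition invariant_wpo_matchings ::
  "nat \<Rightarrow> (nat \<Rightarrow> nat) \<Rightarrow> (nat \<Rightarrow> (nat \<times> nat) set) \<Rightarrow> (nat \<Rightarrow> nat) set" where
  "invariant_wpo_matchings n \<phi> p =
     {\<mu> \<in> matchings n. perm_conj \<mu> \<phi> = \<mu> \<and> weakly_pareto_optimal n p \<mu>}"

lemma invariant_wpo_matchings_profile_act:
  assumes "\<phi> \<in> matchings n"
  shows "invariant_wpo_matchings n \<phi> (profile_act p \<phi>) = invariant_wpo_matchings n \<phi> p"
proof -
  have "invariant_wpo_matchings n \<phi> q \<subseteq> invariant_wpo_matchings n \<phi> (profile_act q \<phi>)" for q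
    using weakly_pareto_optimal_perm_conj[OF subsetD[OF matchings_subset_Gstar assms]]
    unfolding invariant_wpo_matchings_def by fastforce
  from this[of p] this[of "profile_act p \<phi>"] show ?thesis
    by (simp add: profile_act_involution matching_involution[OF assms])
qed

lemma women_men_disjoint: "women n \<inter> men n = {}"
  by (auto simp: women_def men_def)

\<comment> \<open>The conjugate matches a with \<phi> b and b with \<phi> a and agrees with \<phi> elsewhere;
  \<phi> swaps these two pairs.\<close>
lemma perm_conj_transpose_commutes:
  assumes "\<And>z. \<phi> (\<phi> z) = z" "{a, b} \<inter> {\<phi> a, \<phi> b} = {}"
  shows "perm_conj (perm_conj \<phi> (transpose a b)) \<phi> = perm_conj \<phi> (transpose a b)"
proof -
  have "inv \<phi> = \<phi>" using assms(1) by (intro inv_equality) auto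
  moreover have "\<phi> u = \<phi> v \<longleftrightarrow> u = v" for u v by (metis assms(1))
  ultimately show ?thesis using assms
    by (auto simp: perm_conj_def fun_eq_iff transpose_def)
qed

lemma invariant_matching_pairing_exists:
  assumes "\<phi> \<in> matchings n" "x \<in> women n" "m \<in> men n"
  obtains \<mu> where "\<mu> \<in> matchings n" "perm_conj \<mu> \<phi> = \<mu>" "\<mu> x = m"
proof
  let ?\<tau> = "transpose (\<phi> x) m"
  have \<phi>x: "\<phi> x \<in> men n" and \<phi>m: "\<phi> m \<in> women n"
    using assms by (auto simp: matchings_def)
  have "\<phi> x \<notin> women n" "m \<notin> women n" using \<phi>x assms(3) women_men_disjoint by auto
  then have "?\<tau> ` women n = women n" "?\<tau> ` men n = men n" using \<phi>x assms(3) by simp_all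
  moreover have "?\<tau> permutes agents n"
    using \<phi>x assms(3) by (simp add: agents_def permutes_swap_id)
  ultimately have "?\<tau> \<in> Gstar n" by (simp add: Gstar_def)
  then show "perm_conj \<phi> ?\<tau> \<in> matchings n"
    using perm_conj_in_matchings assms(1) by blast
  have "x \<notin> men n" using assms(2) women_men_disjoint by auto
  then have "x \<noteq> \<phi> x" "x \<noteq> m" using \<phi>x assms(3) by auto
  then show "perm_conj \<phi> ?\<tau> x = m" by (simp add: perm_conj_def)
  have "{\<phi> x, m} \<inter> {\<phi> (\<phi> x), \<phi> m} = {}"
    using \<phi>x \<phi>m assms women_men_disjoint[of n] by (auto simp: matching_involution)
  then show "perm_conj (perm_conj \<phi> ?\<tau>) \<phi> = perm_conj \<phi> ?\<tau>"
    using perm_conj_transpose_commutes matching_involution[OF assms(1)] by blast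
qed

lemma weakly_pareto_optimal_if_top_choice:
  assumes "z \<in> agents n" "antisym (p z)"
    and "\<And>\<mu>'. \<mu>' \<in> matchings n \<Longrightarrow> (\<mu> z, \<mu>' z) \<in> p z"
  shows "weakly_pareto_optimal n p \<mu>"
  using assms unfolding weakly_pareto_optimal_def strict_pref_def antisym_def by blast

lemma invariant_wpo_matchings_nonempty:
  assumes "n \<ge> 1" "\<phi> \<in> matchings n" "p \<in> profiles n"
  shows "invariant_wpo_matchings n \<phi> p \<noteq> {}"
proof -
  have one: "1 \<in> women n" using assms(1) by (simp add: women_def)
  then have order: "linear_order_on (men n) (p 1)" using assms(3) by (simp add: profiles_def)
  have "finite (men n)" "men n \<noteq> {}" using assms(1) by (auto simp: men_def)
  then obtain m where m: "m \<in> men n" and top: "\<And>b. b \<in> men n \<Longrightarrow> (m, b) \<in> p 1"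
    using linear_order_on_finite_has_least[OF order] by metis
  obtain \<mu> where \<mu>: "\<mu> \<in> matchings n" "perm_conj \<mu> \<phi> = \<mu>" "\<mu> 1 = m"
    using invariant_matching_pairing_exists[OF assms(2) one m] .
  have "weakly_pareto_optimal n p \<mu>"
  proof (rule weakly_pareto_optimal_if_top_choice)
    show "1 \<in> agents n" using one by (simp add: agents_def)
    show "antisym (p 1)" using order by (simp add: linear_order_on_def partial_order_on_def)
    show "(\<mu> 1, \<mu>' 1) \<in> p 1" if "\<mu>' \<in> matchings n" for \<mu>'
      using that one top \<mu>(3) by (auto simp: matchings_def)
  qed
  with \<mu> show ?thesis by (auto simp: invariant_wpo_matchings_def)
qed

theorem theorem6:
  fixes n :: nat and \<phi> :: "nat \<Rightarrow> nat"
  assumes "n \<ge> 2"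
    and "\<phi> \<in> matchings n"
  shows "\<exists>F. mechanism n F \<and> resolute n F \<and> symmetric_wrt n (gen_group \<phi>) F \<and> mech_wpo n F"
proof -
  define choice where "choice p = (SOME \<mu>. \<mu> \<in> invariant_wpo_matchings n \<phi> p)" for p
  define F where "F p = {choice p}" for p
  have choice: "choice p \<in> invariant_wpo_matchings n \<phi> p" if "p \<in> profiles n" for p
    using invariant_wpo_matchings_nonempty[of n \<phi> p] assms that
    unfolding choice_def by (simp add: some_in_eq)
  have "choice (profile_act p \<phi>) = choice p" for p
    by (simp add: choice_def invariant_wpo_matchings_profile_act[OF assms(2)])
  moreover have "perm_conj (choice p) \<phi> = choice p" if "p \<in> profiles n" for p
    using choice[OF that] by (simp add: invariant_wpo_matchings_def)
  ultimately have "symmetric_wrt n (gen_group \<phi>) F"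
    by (auto simp: symmetric_wrt_def gen_group_def F_def)
  moreover have "mechanism n F" "mech_wpo n F" "resolute n F"
    using choice by (auto simp: mechanism_def mech_wpo_def resolute_def F_def
        invariant_wpo_matchings_def)
  ultimately show ?thesis by blast
qed

end
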